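(* Let $f:\mathbb{R}^{m_1}\to(-\infty,\infty]$ and $g:\mathbb{R}^{m_2}\to(-\infty,\infty]$ be proper closed convex functions, $M:\mathbb{R}^{m_1}\to\mathbb{R}^n$ and $C:\mathbb{R}^{m_2}\to\mathbb{R}^n$ linear operators, and $d\in\mathbb{R}^n$. Let $L$, $h_1$, $h_2$ and $S_e(\partial h_1,\partial h_2)$ be as in the context. (i) If $(u^*,v^*,z^* )$ is a saddle point of $L$, then $(z^*,d-Cv^* )\in S_e(\partial h_1,\partial h_2)$. (ii) Assume moreover (A.2) $\mathrm{ri}(\mathrm{dom}\, f^* )\cap \mathrm{range}(M^* )\neq\emptyset$ and (A.3) $\mathrm{ri}(\mathrm{dom}\, g^* )\cap\mathrm{range}(C^* )\neq\emptyset$. Then for every $(z^*,w^* )\in S_e(\partial h_1,\partial h_2)$ there exist $u^*\in\mathbb{R}^{m_1}$ and $v^*\in\mathbb{R}^{m_2}$ such that $w^*=d-Cv^*$, $w^*=Mu^*$, and $(u^*,v^*,z^* )$ is a saddle point of $L$.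
   Context: The Lagrangian is $L(u,v,z)=f(u)+g(v)+\langle Mu+Cv-d,z\rangle$ on $\mathbb{R}^{m_1}\times\mathbb{R}^{m_2}\times\mathbb{R}^n$. A saddle point of $L$ is a point $(u^*,v^*,z^* )$ with $L(u^*,v^*,z^* )$ finite and $\min_{(u,v)}L(u,v,z^* )=L(u^*,v^*,z^* )=\max_{z}L(u^*,v^*,z)$. For a convex function $\theta$, $\theta^*(y)=\sup_x \langle y,x\rangle-\theta(x)$ is its Fenchel–Legendre conjugate, $\mathrm{ri}$ denotes relative interior, and $M^*,C^*$ are adjoints. Define $h_1(z)=f^*(-M^*z)$, $h_2(z)=g^*(-C^*z)+\langle d,z\rangle$, and the extended solution set $S_e(\partial h_1,\partial h_2)=\{(z,w)\in\mathbb{R}^n\times\mathbb{R}^n: -w\in\partial h_1(z),\ w\in\partial h_2(z)\}$, where $\partial$ denotes the convex subdifferential. *)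

theory Defs
  imports "HOL-Analysis.Analysis"
begin

text \<open>Extended-real valued functions model functions into (-inf, +inf].\<close>

definition edom :: "('a \<Rightarrow> ereal) \<Rightarrow> 'a set" where
  "edom \<theta> = {x. \<theta> x < \<infinity>}"

definition epigraph_e :: "('a \<Rightarrow> ereal) \<Rightarrow> ('a \<times> real) set" where
  "epigraph_e \<theta> = {(x, t). \<theta> x \<le> ereal t}"

definition proper_fun :: "('a \<Rightarrow> ereal) \<Rightarrow> bool" where
  "proper_fun \<theta> \<longleftrightarrow> (\<forall>x. \<theta> x \<noteq> -\<infinity>) \<and> (\<exists>x. \<theta> x < \<infinity>)"

definition convex_fun :: "('a::real_vector \<Rightarrow> ereal) \<Rightarrow> bool" where
  "convex_fun \<theta> \<longleftrightarrow> convex (epigraph_e \<theta>)"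

definition closed_fun :: "('a::topological_space \<Rightarrow> ereal) \<Rightarrow> bool" where
  "closed_fun \<theta> \<longleftrightarrow> closed (epigraph_e \<theta>)"

definition conj_fun :: "('a::real_inner \<Rightarrow> ereal) \<Rightarrow> 'a \<Rightarrow> ereal" where
  "conj_fun \<theta> y = (SUP x. ereal (inner y x) - \<theta> x)"

definition subdiff :: "('a::real_inner \<Rightarrow> ereal) \<Rightarrow> 'a \<Rightarrow> 'a set" where
  "subdiff \<theta> z = {w. \<bar>\<theta> z\<bar> \<noteq> \<infinity> \<and> (\<forall>y. \<theta> z + ereal (inner w (y - z)) \<le> \<theta> y)}"

definition lagrangian ::
  "('a::euclidean_space \<Rightarrow> ereal) \<Rightarrow> ('b::euclidean_space \<Rightarrow> ereal) \<Rightarrow>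
   ('a \<Rightarrow> 'c::euclidean_space) \<Rightarrow> ('b \<Rightarrow> 'c) \<Rightarrow> 'c \<Rightarrow> 'a \<Rightarrow> 'b \<Rightarrow> 'c \<Rightarrow> ereal" where
  "lagrangian f g M C d u v z = f u + g v + ereal (inner (M u + C v - d) z)"

definition saddle_point ::
  "('a \<Rightarrow> 'b \<Rightarrow> 'c \<Rightarrow> ereal) \<Rightarrow> 'a \<Rightarrow> 'b \<Rightarrow> 'c \<Rightarrow> bool" where
  "saddle_point L u v z \<longleftrightarrow>
     \<bar>L u v z\<bar> \<noteq> \<infinity> \<and>
     (INF p. L (fst p) (snd p) z) = L u v z \<and>
     (SUP z'. L u v z') = L u v z"

definition h1_fun :: "('a::euclidean_space \<Rightarrow> ereal) \<Rightarrow> ('a \<Rightarrow> 'c::euclidean_space) \<Rightarrow> 'c \<Rightarrow> ereal" where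
  "h1_fun f M z = conj_fun f (- adjoint M z)"

definition h2_fun :: "('b::euclidean_space \<Rightarrow> ereal) \<Rightarrow> ('b \<Rightarrow> 'c::euclidean_space) \<Rightarrow> 'c \<Rightarrow> 'c \<Rightarrow> ereal" where
  "h2_fun g C d z = conj_fun g (- adjoint C z) + ereal (inner d z)"

definition ext_sol_set :: "('c::real_inner \<Rightarrow> ereal) \<Rightarrow> ('c \<Rightarrow> ereal) \<Rightarrow> ('c \<times> 'c) set" where
  "ext_sol_set h1 h2 = {(z, w). - w \<in> subdiff h1 z \<and> w \<in> subdiff h2 z}"

end

theory Submission
  imports Defs
begin

text \<open>
  (i) At a saddle point the supremum over \<open>z\<close> forces \<open>M u + C v = d\<close>, and the infimum makes \<open>u\<close>
  and \<open>v\<close> minimizers of \<open>f + \<langle>z, M \<cdot>\<rangle>\<close> and \<open>g + \<langle>z, C \<cdot>\<rangle>\<close>. At such minimizers the conjugates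
  are attained, which identifies \<open>- M u\<close> and \<open>- C v\<close> as subgradients of \<open>y \<mapsto> f\<^sup>*(- M\<^sup>* y)\<close> and
  \<open>y \<mapsto> g\<^sup>*(- C\<^sup>* y)\<close> at \<open>z\<close>; \<open>h\<^sub>2\<close> only adds the linear term \<open>\<langle>d, \<cdot>\<rangle>\<close>.

  (ii) Conversely, \<open>h\<^sub>1(y)\<close> is the support function of the image \<open>E\<close> of \<open>epi f\<close> under
  \<open>(x, t) \<mapsto> (M x, t)\<close> in direction \<open>(- y, - 1)\<close>. If \<open>- w \<in> \<partial>h\<^sub>1(z)\<close>, no hyperplane can separate
  \<open>(w, - h\<^sub>1(z) - \<langle>z, w\<rangle>)\<close> from \<open>E\<close>, so if \<open>E\<close> is closed this point lies in \<open>E\<close> and provides \<open>u\<close>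
  with \<open>M u = w\<close> minimizing \<open>f + \<langle>z, M \<cdot>\<rangle>\<close>. Closedness of \<open>E\<close> is where (A.2) enters: by
  Fenchel--Moreau, \<open>f\<close> is invariant along directions orthogonal to \<open>dom f\<^sup>*\<close>, and a point
  \<open>M\<^sup>* y\<^sub>0\<close> in the relative interior of \<open>dom f\<^sup>*\<close> bounds the remaining coordinates on sublevel sets
  once \<open>M x\<close> is bounded, so every point of \<open>E\<close> has a preimage of controlled norm.
\<close>

section \<open>Conjugates and the Fenchel--Moreau inequality\<close>

lemma conj_fun_upper: "ereal (inner p x) - f x \<le> conj_fun f p"
  unfolding conj_fun_def by (rule SUP_upper) simp

lemma conj_fun_least: "(\<And>x. ereal (inner p x) - f x \<le> c) \<Longrightarrow> conj_fun f p \<le> c"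
  unfolding conj_fun_def by (rule SUP_least)

lemma conj_fun_ge:
  assumes "f x \<le> ereal s" shows "ereal (inner p x - s) \<le> conj_fun f p"
proof -
  have "ereal (inner p x) - ereal s \<le> ereal (inner p x) - f x"
    using assms by (rule ereal_minus_mono[OF order_refl])
  then show ?thesis using conj_fun_upper[of p x f] by simp
qed

lemma conj_fun_le_iff:
  "conj_fun f p \<le> ereal c \<longleftrightarrow> (\<forall>x s. f x \<le> ereal s \<longrightarrow> inner p x - s \<le> c)"
proof
  assume "conj_fun f p \<le> ereal c"
  then show "\<forall>x s. f x \<le> ereal s \<longrightarrow> inner p x - s \<le> c"
    using conj_fun_ge[of f _ _ p] by (fastforce dest: order_trans)
next
  assume H: "\<forall>x s. f x \<le> ereal s \<longrightarrow> inner p x - s \<le> c"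
  show "conj_fun f p \<le> ereal c"
  proof (rule conj_fun_least)
    fix x
    show "ereal (inner p x) - f x \<le> ereal c"
    proof (cases "f x")
      case MInf
      then show ?thesis using H[rule_format, of x "inner p x - c - 1"] by simp
    qed (use H in auto)
  qed
qed

lemma fenchel_young: "ereal (inner x p) - conj_fun f p \<le> f x"
proof (cases "f x")
  case (real s)
  then have "ereal (inner p x - s) \<le> conj_fun f p" by (simp add: conj_fun_ge)
  then show ?thesis using real by (cases "conj_fun f p") (auto simp: inner_commute)
next
  case MInf
  then have "conj_fun f p = \<infinity>" using conj_fun_upper[of p x f] by simp
  then show ?thesis by simp
qed simp

lemma proper_funD: "proper_fun f \<Longrightarrow> f x \<noteq> -\<infinity>"
  unfolding proper_fun_def by simp

lemma proper_fun_obtain_finite: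
  assumes "proper_fun f" obtains x c where "f x = ereal c"
proof -
  obtain x where "f x < \<infinity>" "f x \<noteq> -\<infinity>" using assms unfolding proper_fun_def by auto
  then show ?thesis using that by (cases "f x") auto
qed

lemma separate_point_upclosed:
  fixes E :: "('a::euclidean_space \<times> real) set"
  assumes "closed E" "convex E" "(x, r) \<notin> E" "(x0, r0) \<in> E"
    and up: "\<And>q t t'. (q, t) \<in> E \<Longrightarrow> t \<le> t' \<Longrightarrow> (q, t') \<in> E"
  shows "\<exists>a c b. 0 \<le> c \<and> inner a x + c * r < b \<and> (\<forall>q t. (q, t) \<in> E \<longrightarrow> b < inner a q + c * t)"
proof -
  obtain A b where A: "inner A (x, r) < b" "\<And>p. p \<in> E \<Longrightarrow> b < inner A p"
    using separating_hyperplane_closed_point[OF assms(2,1,3)] by blast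
  obtain a c where ac: "A = (a, c)" by (cases A)
  have sep: "b < inner a q + c * t" if "(q, t) \<in> E" for q t
    using A(2)[OF that] ac by simp
  have "0 \<le> c"
  proof (rule ccontr)
    assume "\<not> 0 \<le> c"
    define t where "t = r0 + (\<bar>inner a x0 + c * r0 - b\<bar> + 1) / - c"
    have "r0 \<le> t" using \<open>\<not> 0 \<le> c\<close> unfolding t_def by (simp add: divide_nonneg_neg)
    then have "b < inner a x0 + c * t" using sep up assms(4) by blast
    moreover have "c * t = c * r0 - (\<bar>inner a x0 + c * r0 - b\<bar> + 1)"
      using \<open>\<not> 0 \<le> c\<close> unfolding t_def by (simp add: field_simps)
    ultimately show False by linarith
  qed
  with A(1) ac sep show ?thesis by auto
qed

lemma epigraph_e_iff [simp]: "(x, t) \<in> epigraph_e f \<longleftrightarrow> f x \<le> ereal t"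
  unfolding epigraph_e_def by simp

lemma epigraph_e_upclosed: "(x, t) \<in> epigraph_e f \<Longrightarrow> t \<le> t' \<Longrightarrow> (x, t') \<in> epigraph_e f"
  by (auto intro: order_trans)

lemma separate_point_epigraph:
  fixes f :: "'a::euclidean_space \<Rightarrow> ereal"
  assumes "proper_fun f" "closed_fun f" "convex_fun f" "\<not> f x \<le> ereal r"
  shows "\<exists>a c b. 0 \<le> c \<and> inner a x + c * r < b \<and> (\<forall>y s. f y \<le> ereal s \<longrightarrow> b < inner a y + c * s)"
proof -
  obtain x0 r0 where "f x0 = ereal r0" using proper_fun_obtain_finite[OF assms(1)] .
  then have "(x0, r0) \<in> epigraph_e f" by simp
  moreover have "(x, r) \<notin> epigraph_e f" using assms(4) by simp
  moreover have "closed (epigraph_e f)" "convex (epigraph_e f)"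
    using assms(2,3) unfolding closed_fun_def convex_fun_def by auto
  ultimately show ?thesis
    using separate_point_upclosed[of "epigraph_e f", OF _ _ _ _ epigraph_e_upclosed] by simp
qed

lemma conj_fun_le_of_separation:
  assumes "0 < c" "\<And>y s. f y \<le> ereal s \<Longrightarrow> b < inner a y + c * s"
  shows "conj_fun f (- (1 / c) *\<^sub>R a) \<le> ereal (- b / c)"
  unfolding conj_fun_le_iff
proof (intro allI impI)
  fix y s assume "f y \<le> ereal s"
  then have "b < inner a y + c * s" by (rule assms(2))
  then have "- (inner a y + c * s) / c \<le> - b / c"
    using assms(1) by (intro divide_right_mono) auto
  then show "inner (- (1 / c) *\<^sub>R a) y - s \<le> - b / c"
    using \<open>0 < c\<close> by (simp add: add_divide_distrib diff_divide_distrib)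
qed

lemma conj_fun_obtain_upper_bound:
  fixes f :: "'a::euclidean_space \<Rightarrow> ereal"
  assumes "proper_fun f" "closed_fun f" "convex_fun f"
  obtains p c where "conj_fun f p \<le> ereal c"
proof -
  obtain x0 r0 where r0: "f x0 = ereal r0" using proper_fun_obtain_finite[OF assms(1)] .
  then have "\<not> f x0 \<le> ereal (r0 - 1)" by simp
  then obtain a c b where sep: "inner a x0 + c * (r0 - 1) < b" "\<And>y s. f y \<le> ereal s \<Longrightarrow> b < inner a y + c * s"
    using separate_point_epigraph[OF assms] by blast
  have "0 < c" using sep(1) sep(2)[of x0 r0] r0 by (simp add: algebra_simps)
  then show ?thesis using conj_fun_le_of_separation[OF _ sep(2)] that by blast
qed

text \<open>A vertical separating hyperplane is tilted by an affine minorant of \<open>f\<close>.\<close>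
lemma conj_fun_separates_below_epigraph:
  fixes f :: "'a::euclidean_space \<Rightarrow> ereal"
  assumes "proper_fun f" "closed_fun f" "convex_fun f" "\<not> f x \<le> ereal r"
  shows "\<exists>p \<beta>. conj_fun f p \<le> ereal \<beta> \<and> r < inner x p - \<beta>"
proof -
  obtain a c b where sep: "0 \<le> c" "inner a x + c * r < b" "\<And>y s. f y \<le> ereal s \<Longrightarrow> b < inner a y + c * s"
    using separate_point_epigraph[OF assms] by blast
  show ?thesis
  proof (cases "c = 0")
    case False
    then have "0 < c" using sep(1) by simp
    note conj_fun_le_of_separation[OF \<open>0 < c\<close> sep(3)]
    moreover have "r < inner x (- (1 / c) *\<^sub>R a) - - b / c"
    proof -
      have "c * r < b - inner a x" using sep(2) by simp
      then have "r < (b - inner a x) / c" using \<open>0 < c\<close> by (simp add: pos_less_divide_eq mult.commute)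
      then show ?thesis by (simp add: inner_commute diff_divide_distrib)
    qed
    ultimately show ?thesis by blast
  next
    case True
    obtain p1 K where K: "conj_fun f p1 \<le> ereal K" using conj_fun_obtain_upper_bound[OF assms(1-3)] .
    define t where "t = (\<bar>r - inner x p1 + K\<bar> + 1) / (b - inner a x)"
    have "0 < b - inner a x" using sep(2) True by simp
    then have "0 < t" "t * (b - inner a x) = \<bar>r - inner x p1 + K\<bar> + 1"
      unfolding t_def by (simp_all add: add_pos_nonneg)
    have "conj_fun f (p1 - t *\<^sub>R a) \<le> ereal (K - t * b)"
      unfolding conj_fun_le_iff
    proof (intro allI impI)
      fix y s assume ys: "f y \<le> ereal s"
      have "inner p1 y - s \<le> K" using K ys unfolding conj_fun_le_iff by blast
      moreover have "t * b \<le> t * inner a y" using sep(3)[OF ys] True \<open>0 < t\<close> by simp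
      ultimately show "inner (p1 - t *\<^sub>R a) y - s \<le> K - t * b" by (simp add: inner_diff_left)
    qed
    moreover have "r < inner x (p1 - t *\<^sub>R a) - (K - t * b)"
      using \<open>t * (b - inner a x) = _\<close> by (simp add: inner_diff_right algebra_simps inner_commute)
    ultimately show ?thesis by blast
  qed
qed

lemma fenchel_moreau_le:
  fixes f :: "'a::euclidean_space \<Rightarrow> ereal"
  assumes "proper_fun f" "closed_fun f" "convex_fun f"
  shows "f x \<le> conj_fun (conj_fun f) x"
proof (rule ccontr)
  assume "\<not> f x \<le> conj_fun (conj_fun f) x"
  then obtain r where r: "conj_fun (conj_fun f) x < ereal r" "ereal r < f x"
    using ereal_dense2 by (metis not_le)
  then have "\<not> f x \<le> ereal r" by simp
  then obtain p \<beta> where p: "conj_fun f p \<le> ereal \<beta>" "r < inner x p - \<beta>"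
    using conj_fun_separates_below_epigraph[OF assms] by blast
  have "ereal (inner x p) - ereal \<beta> \<le> ereal (inner x p) - conj_fun f p"
    by (rule ereal_minus_mono[OF order_refl p(1)])
  also have "\<dots> \<le> conj_fun (conj_fun f) x" by (rule conj_fun_upper)
  also note r(1)
  finally show False using p(2) by simp
qed

section \<open>Closedness of the projected epigraph\<close>

lemma translate_orthogonal_edom_conj_le:
  fixes f :: "'a::euclidean_space \<Rightarrow> ereal"
  assumes "proper_fun f" "closed_fun f" "convex_fun f"
    and orth: "\<And>p. p \<in> edom (conj_fun f) \<Longrightarrow> inner p n = 0"
  shows "f (x + n) \<le> f x"
proof -
  have "conj_fun (conj_fun f) (x + n) \<le> f x"
  proof (rule conj_fun_least)
    fix p
    show "ereal (inner (x + n) p) - conj_fun f p \<le> f x"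
    proof (cases "p \<in> edom (conj_fun f)")
      case True
      have "inner (x + n) p = inner x p" using orth[OF True] by (simp add: inner_add_left inner_commute[of n p])
      then show ?thesis using fenchel_young[of x p f] by simp
    next
      case False
      then show ?thesis by (simp add: edom_def)
    qed
  qed
  then show ?thesis using fenchel_moreau_le[OF assms(1-3)] order_trans by blast
qed

lemma rel_interior_obtain_symmetric_spanning:
  fixes D :: "'a::euclidean_space set"
  assumes "p \<in> rel_interior D"
  obtains B where "finite B" "\<And>b. b \<in> B \<Longrightarrow> p + b \<in> D \<and> p - b \<in> D"
    "\<And>q. q \<in> D \<Longrightarrow> q - p \<in> span B"
proof -
  obtain e where "p \<in> D" "e > 0" and e: "ball p e \<inter> affine hull D \<subseteq> D"
    using assms unfolding mem_rel_interior_ball by blast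
  define V where "V = span ((\<lambda>x. - p + x) ` (D - {p}))"
  have aff: "affine hull D = (\<lambda>x. p + x) ` V"
    using affine_hull_span2[OF \<open>p \<in> D\<close>] unfolding V_def .
  obtain B0 where B0: "B0 \<subseteq> V" "independent B0" "V \<subseteq> span B0"
    by (rule maximal_independent_subset)
  have "finite B0" "0 \<notin> B0" using B0(2) finiteI_independent dependent_zero by blast+
  define B where "B = (\<lambda>b. (e / 2 / norm b) *\<^sub>R b) ` B0"
  have span_B: "span B = span B0"
    unfolding B_def using \<open>finite B0\<close> \<open>0 \<notin> B0\<close> \<open>e > 0\<close> by (intro span_image_scale) auto
  show thesis
  proof
    show "finite B" unfolding B_def using \<open>finite B0\<close> by simp
  next
    fix b assume "b \<in> B"
    then obtain b0 where b0: "b0 \<in> B0" "b = (e / 2 / norm b0) *\<^sub>R b0" unfolding B_def by blast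
    have "b \<in> V" using b0 B0(1) unfolding V_def by (simp add: span_scale subset_iff)
    then have "p + b \<in> affine hull D" "p + - b \<in> affine hull D"
      using aff span_neg[of b] unfolding V_def by auto
    moreover have "norm b = e / 2" using b0 \<open>0 \<notin> B0\<close> \<open>e > 0\<close> by auto
    then have "p + b \<in> ball p e" "p + - b \<in> ball p e" using \<open>e > 0\<close> by (auto simp: dist_norm)
    ultimately show "p + b \<in> D \<and> p - b \<in> D" using e by auto
  next
    fix q assume "q \<in> D"
    then have "q - p \<in> V"
      unfolding V_def by (cases "q = p") (auto intro: span_base simp: span_zero)
    then show "q - p \<in> span B" using B0(3) span_B by blast
  qed
qed

lemma abs_inner_le_on_sublevel:
  assumes "p + b \<in> edom (conj_fun f)" "p - b \<in> edom (conj_fun f)"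
  obtains c where "\<And>x s. f x \<le> ereal s \<Longrightarrow> \<bar>inner b x\<bar> \<le> s - inner p x + c"
proof -
  have "\<exists>c. conj_fun f (p + b) \<le> ereal c" "\<exists>c. conj_fun f (p - b) \<le> ereal c"
    using assms unfolding edom_def by (cases "conj_fun f (p + b)"; cases "conj_fun f (p - b)"; auto)+
  then obtain c1 c2 where c: "conj_fun f (p + b) \<le> ereal c1" "conj_fun f (p - b) \<le> ereal c2"
    by blast
  show thesis
  proof
    fix x s assume "f x \<le> ereal s"
    then have "inner (p + b) x - s \<le> c1" "inner (p - b) x - s \<le> c2"
      using c unfolding conj_fun_le_iff by blast+
    then have "inner p x + inner b x - s \<le> max c1 c2" "inner p x - inner b x - s \<le> max c1 c2"
      by (simp_all add: inner_add_left inner_diff_left le_max_iff_disj)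
    then show "\<bar>inner b x\<bar> \<le> s - inner p x + max c1 c2"
      by (intro abs_leI) linarith+
  qed
qed

lemma sum_inner_scaleR_eq_0D:
  fixes B :: "'a::real_inner set"
  assumes "finite B" "(\<Sum>b\<in>B. inner b x *\<^sub>R b) = 0" "b \<in> B"
  shows "inner b x = 0"
proof -
  have "(\<Sum>b\<in>B. (inner b x)\<^sup>2) = inner x (\<Sum>b\<in>B. inner b x *\<^sub>R b)"
    by (simp add: inner_sum_right power2_eq_square inner_commute)
  then have "(\<Sum>b\<in>B. (inner b x)\<^sup>2) = 0" using assms(2) by simp
  then show ?thesis using sum_nonneg_eq_0_iff[OF assms(1), of "\<lambda>b. (inner b x)\<^sup>2"] assms(3) by simp
qed

lemma norm_sum_inner_scaleR_le:
  fixes B :: "'a::real_inner set"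
  assumes "\<And>b. b \<in> B \<Longrightarrow> \<bar>inner b x\<bar> \<le> k b"
  shows "norm (\<Sum>b\<in>B. inner b x *\<^sub>R b) \<le> (\<Sum>b\<in>B. k b * norm b)"
proof -
  have "norm (\<Sum>b\<in>B. inner b x *\<^sub>R b) \<le> (\<Sum>b\<in>B. \<bar>inner b x\<bar> * norm b)"
    by (rule order_trans[OF norm_sum]) simp
  also have "\<dots> \<le> (\<Sum>b\<in>B. k b * norm b)"
    using assms by (intro sum_mono mult_right_mono) auto
  finally show ?thesis .
qed

lemma linear_obtain_small_preimages:
  fixes T :: "'a::euclidean_space \<Rightarrow> 'b::euclidean_space"
  assumes "linear T"
  obtains e where "e > 0" "\<And>x. \<exists>x'. T x' = T x \<and> e * norm x' \<le> norm (T x)"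
proof -
  define K where "K = {n. T n = 0}"
  define S where "S = {r. \<forall>n\<in>K. inner r n = 0}"
  have "subspace K"
    unfolding K_def subspace_def using linear_add[OF assms] linear_scale[OF assms] linear_0[OF assms] by auto
  have "subspace S" unfolding S_def subspace_def by (auto simp: inner_add_left)
  moreover have "closed S" by (rule closed_subspace[OF \<open>subspace S\<close>])
  moreover have "\<forall>r\<in>S. T r = 0 \<longrightarrow> r = 0" unfolding S_def K_def by auto
  ultimately obtain e where "e > 0" and e: "\<And>r. r \<in> S \<Longrightarrow> e * norm r \<le> norm (T r)"
    using injective_imp_isometric[of S T] assms linear_conv_bounded_linear by blast
  show thesis
  proof (rule that[OF \<open>e > 0\<close>])
    fix x
    obtain y z where "y \<in> span K" "\<And>w. w \<in> span K \<Longrightarrow> orthogonal z w" "x = y + z"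
      using orthogonal_subspace_decomp_exists by blast
    moreover have "span K = K" using \<open>subspace K\<close> by simp
    ultimately have "y \<in> K" "z \<in> S" unfolding S_def orthogonal_def by auto
    then have "T z = T x" using \<open>x = y + z\<close> linear_add[OF assms] unfolding K_def by simp
    then show "\<exists>x'. T x' = T x \<and> e * norm x' \<le> norm (T x)" using e \<open>z \<in> S\<close> by metis
  qed
qed

lemma closed_linear_image_bounded_preimages:
  fixes L :: "'a::euclidean_space \<Rightarrow> 'b::euclidean_space"
  assumes "linear L" "closed S"
    and bnd: "\<And>R. \<exists>R'. \<forall>s\<in>S. norm (L s) \<le> R \<longrightarrow> (\<exists>s'\<in>S. L s' = L s \<and> norm s' \<le> R')"
  shows "closed (L ` S)"
  unfolding closed_sequential_limits
proof (intro allI impI, elim conjE)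
  fix X l assume X: "\<forall>n. X n \<in> L ` S" "X \<longlonglongrightarrow> l"
  obtain R where "\<And>n. norm (X n) \<le> R"
    using convergent_imp_bounded[OF X(2)] unfolding bounded_iff by auto
  moreover obtain R' where "\<forall>s\<in>S. norm (L s) \<le> R \<longrightarrow> (\<exists>s'\<in>S. L s' = L s \<and> norm s' \<le> R')"
    using bnd by blast
  ultimately have "\<forall>n. \<exists>s\<in>S. L s = X n \<and> norm s \<le> R'" using X(1) by (metis imageE)
  then obtain s where s: "\<And>n. s n \<in> S" "\<And>n. L (s n) = X n" "\<And>n. norm (s n) \<le> R'" by metis
  then have "bounded (range s)" unfolding bounded_iff by blast
  then obtain s0 \<sigma> where \<sigma>: "strict_mono \<sigma>" "(s \<circ> \<sigma>) \<longlonglongrightarrow> s0"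
    using bounded_imp_convergent_subsequence by blast
  have "s0 \<in> S" using closed_sequentially[OF assms(2) _ \<sigma>(2)] s(1) by simp
  have "(\<lambda>n. L (s (\<sigma> n))) \<longlonglongrightarrow> L s0"
    using bounded_linear.tendsto[OF assms(1)[unfolded linear_conv_bounded_linear] \<sigma>(2)]
    by (simp add: o_def)
  moreover have "(\<lambda>n. L (s (\<sigma> n))) \<longlonglongrightarrow> l"
    using LIMSEQ_subseq_LIMSEQ[OF X(2) \<sigma>(1)] s(2) by (simp add: o_def)
  ultimately have "L s0 = l" by (rule LIMSEQ_unique)
  with \<open>s0 \<in> S\<close> show "l \<in> L ` S" by blast
qed

lemma linear_map_prod_id:
  fixes M :: "'a::real_vector \<Rightarrow> 'b::real_vector"
  assumes "linear M" shows "linear (map_prod M (id :: 'c::real_vector \<Rightarrow> 'c))"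
proof (rule linearI)
  fix u v :: "'a \<times> 'c" and c :: real
  show "map_prod M id (u + v) = map_prod M id u + map_prod M id v"
    by (cases u; cases v) (simp add: linear_add[OF assms])
  show "map_prod M id (c *\<^sub>R u) = c *\<^sub>R map_prod M id u"
    by (cases u) (simp add: linear_scale[OF assms])
qed

lemma closed_map_prod_epigraph_if_invariant:
  fixes f :: "'a::euclidean_space \<Rightarrow> ereal" and M :: "'a \<Rightarrow> 'c::euclidean_space"
    and T :: "'a \<Rightarrow> 'd::euclidean_space"
  assumes "closed_fun f" "linear M" "linear T"
    and ker: "\<And>x n. T n = 0 \<Longrightarrow> M n = 0 \<and> f (x + n) \<le> f x"
    and bnd: "\<And>R. \<exists>K. \<forall>x t. f x \<le> ereal t \<longrightarrow> \<bar>t\<bar> \<le> R \<longrightarrow> norm (M x) \<le> R \<longrightarrow> norm (T x) \<le> K"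
  shows "closed (map_prod M id ` epigraph_e f)"
proof (rule closed_linear_image_bounded_preimages)
  show "linear (map_prod M id)" using assms(2) by (rule linear_map_prod_id)
  show "closed (epigraph_e f)" using assms(1) unfolding closed_fun_def .
  obtain e where "e > 0" and e: "\<And>x. \<exists>x'. T x' = T x \<and> e * norm x' \<le> norm (T x)"
    using linear_obtain_small_preimages[OF assms(3)] by blast
  fix R
  obtain K where K: "\<And>x t. f x \<le> ereal t \<Longrightarrow> \<bar>t\<bar> \<le> R \<Longrightarrow> norm (M x) \<le> R \<Longrightarrow> norm (T x) \<le> K"
    using bnd by blast
  have "\<exists>s'\<in>epigraph_e f. map_prod M id s' = map_prod M id s \<and> norm s' \<le> K / e + R"
    if "s \<in> epigraph_e f" "norm (map_prod M id s) \<le> R" for s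
  proof -
    obtain x t where s: "s = (x, t)" by (cases s)
    have "f x \<le> ereal t" "\<bar>t\<bar> \<le> R" "norm (M x) \<le> R"
      using that norm_fst_le[of "M x" t] norm_snd_le[of t "M x"] unfolding s by auto
    then have "norm (T x) \<le> K" by (rule K)
    obtain x' where x': "T x' = T x" "e * norm x' \<le> norm (T x)" using e by blast
    have "T (x' - x) = 0" using x'(1) linear_diff[OF assms(3)] by simp
    then have "M x' = M x" "f x' \<le> f x"
      using ker[of "x' - x" x] linear_diff[OF assms(2)] by auto
    moreover have "norm x' \<le> K / e"
      using x'(2) \<open>norm (T x) \<le> K\<close> \<open>e > 0\<close> by (simp add: pos_le_divide_eq mult.commute)
    then have "norm (x', t) \<le> K / e + R" using norm_Pair_le[of x' t] \<open>\<bar>t\<bar> \<le> R\<close> by simp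
    ultimately show ?thesis using \<open>f x \<le> ereal t\<close> unfolding s by (auto intro!: bexI[of _ "(x', t)"])
  qed
  then show "\<exists>R'. \<forall>s\<in>epigraph_e f. norm (map_prod M id s) \<le> R \<longrightarrow>
      (\<exists>s'\<in>epigraph_e f. map_prod M id s' = map_prod M id s \<and> norm s' \<le> R')" by blast
qed

text \<open>Along directions orthogonal to \<open>dom f\<^sup>*\<close> that \<open>M\<close> annihilates, \<open>f\<close> is invariant; in the
  directions \<open>b\<close> with \<open>adjoint M y0 \<plusminus> b \<in> dom f\<^sup>*\<close> it is coercive on sublevel sets.\<close>
lemma closed_map_prod_epigraph:
  fixes f :: "'a::euclidean_space \<Rightarrow> ereal" and M :: "'a \<Rightarrow> 'c::euclidean_space"
  assumes f: "proper_fun f" "closed_fun f" "convex_fun f" and "linear M"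
    and ri: "adjoint M y0 \<in> rel_interior (edom (conj_fun f))"
  shows "closed (map_prod M id ` epigraph_e f)"
proof -
  have adj: "inner (adjoint M y0) x = inner y0 (M x)" for x
    using adjoint_clauses(2)[OF \<open>linear M\<close>] .
  obtain B where B: "finite B" "\<And>b. b \<in> B \<Longrightarrow> adjoint M y0 + b \<in> edom (conj_fun f) \<and> adjoint M y0 - b \<in> edom (conj_fun f)"
    "\<And>q. q \<in> edom (conj_fun f) \<Longrightarrow> q - adjoint M y0 \<in> span B"
    using rel_interior_obtain_symmetric_spanning[OF ri] by blast
  have "\<forall>b\<in>B. \<exists>c. \<forall>x s. f x \<le> ereal s \<longrightarrow> \<bar>inner b x\<bar> \<le> s - inner y0 (M x) + c"
    using abs_inner_le_on_sublevel B(2) adj by metis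
  then obtain c where c: "\<And>b x s. b \<in> B \<Longrightarrow> f x \<le> ereal s \<Longrightarrow> \<bar>inner b x\<bar> \<le> s - inner y0 (M x) + c b"
    by metis
  define T where "T x = ((\<Sum>b\<in>B. inner b x *\<^sub>R b), M x)" for x
  show ?thesis
  proof (rule closed_map_prod_epigraph_if_invariant[OF f(2) \<open>linear M\<close>])
    show "linear T"
      unfolding T_def using \<open>linear M\<close>
      by (intro linearI) (simp_all add: inner_add_right scaleR_add_left sum.distrib scaleR_sum_right
          linear_add linear_scale)
  next
    fix x n assume "T n = 0"
    then have sum0: "(\<Sum>b\<in>B. inner b n *\<^sub>R b) = 0" and "M n = 0"
      unfolding T_def by (simp_all add: zero_prod_def)
    note orth = sum_inner_scaleR_eq_0D[OF B(1) sum0]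
    have "inner q n = 0" if "q \<in> edom (conj_fun f)" for q
    proof -
      have "orthogonal n (q - adjoint M y0)"
        using orthogonal_to_span[OF B(3)[OF that]] orth by (simp add: orthogonal_def inner_commute)
      then show ?thesis using adj[of n] \<open>M n = 0\<close> by (simp add: orthogonal_def inner_diff_right inner_commute)
    qed
    then show "M n = 0 \<and> f (x + n) \<le> f x"
      using \<open>M n = 0\<close> translate_orthogonal_edom_conj_le[OF f] by blast
  next
    fix R
    define K where "K = (\<Sum>b\<in>B. (R + norm y0 * R + c b) * norm b) + R"
    have "norm (T x) \<le> K" if "f x \<le> ereal t" "\<bar>t\<bar> \<le> R" "norm (M x) \<le> R" for x t
    proof -
      have "\<bar>inner y0 (M x)\<bar> \<le> norm y0 * R"
        using Cauchy_Schwarz_ineq2[of y0 "M x"] mult_left_mono[OF that(3), of "norm y0"] by simp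
      then have "\<bar>inner b x\<bar> \<le> R + norm y0 * R + c b" if "b \<in> B" for b
        using c[OF that \<open>f x \<le> ereal t\<close>] \<open>\<bar>t\<bar> \<le> R\<close> by linarith
      then have "norm (\<Sum>b\<in>B. inner b x *\<^sub>R b) \<le> (\<Sum>b\<in>B. (R + norm y0 * R + c b) * norm b)"
        by (rule norm_sum_inner_scaleR_le)
      then show ?thesis
        using norm_Pair_le[of "\<Sum>b\<in>B. inner b x *\<^sub>R b" "M x"] \<open>norm (M x) \<le> R\<close>
        unfolding T_def K_def by linarith
    qed
    then show "\<exists>K. \<forall>x t. f x \<le> ereal t \<longrightarrow> \<bar>t\<bar> \<le> R \<longrightarrow> norm (M x) \<le> R \<longrightarrow> norm (T x) \<le> K"
      by blast
  qed
qed

section \<open>Subgradients of the dual function\<close>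

definition epi_support :: "('c::real_inner \<times> real) set \<Rightarrow> 'c \<Rightarrow> ereal" where
  "epi_support E y = (SUP p\<in>E. ereal (- inner y (fst p) - snd p))"

lemma epi_support_upper: "(q, t) \<in> E \<Longrightarrow> ereal (- inner y q - t) \<le> epi_support E y"
  unfolding epi_support_def by (rule SUP_upper2) auto

lemma epi_support_le:
  "(\<And>q t. (q, t) \<in> E \<Longrightarrow> - inner y q - t \<le> \<beta>) \<Longrightarrow> epi_support E y \<le> ereal \<beta>"
  unfolding epi_support_def by (rule SUP_least) auto

lemma h1_fun_eq_epi_support:
  fixes f :: "'a::euclidean_space \<Rightarrow> ereal" and M :: "'a \<Rightarrow> 'c::euclidean_space"
  assumes "proper_fun f" "linear M"
  shows "h1_fun f M = epi_support (map_prod M id ` epigraph_e f)"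
proof
  fix y
  have adj: "inner (- adjoint M y) x = - inner y (M x)" for x
    using adjoint_clauses(2)[OF assms(2)] by simp
  show "h1_fun f M y = epi_support (map_prod M id ` epigraph_e f) y"
    unfolding h1_fun_def
  proof (rule antisym)
    show "conj_fun f (- adjoint M y) \<le> epi_support (map_prod M id ` epigraph_e f) y"
    proof (rule conj_fun_least)
      fix x
      show "ereal (inner (- adjoint M y) x) - f x \<le> epi_support (map_prod M id ` epigraph_e f) y"
      proof (cases "f x")
        case (real c)
        then have "(M x, c) \<in> map_prod M id ` epigraph_e f" by (intro image_eqI[of _ _ "(x, c)"]) auto
        then have "ereal (- inner y (M x) - c) \<le> epi_support (map_prod M id ` epigraph_e f) y"
          by (rule epi_support_upper)
        then show ?thesis using real adj by simp
      qed (use proper_funD[OF assms(1)] in auto)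
    qed
  next
    show "epi_support (map_prod M id ` epigraph_e f) y \<le> conj_fun f (- adjoint M y)"
      unfolding epi_support_def
    proof (rule SUP_least)
      fix p assume "p \<in> map_prod M id ` epigraph_e f"
      then obtain x t where "p = (M x, t)" "f x \<le> ereal t" by force
      then show "ereal (- inner y (fst p) - snd p) \<le> conj_fun f (- adjoint M y)"
        using conj_fun_ge[of f x t "- adjoint M y"] adj by simp
    qed
  qed
qed

text \<open>The subgradient inequality at \<open>z\<close>, tested at the slope of a separating hyperplane, rules out
  every hyperplane separating \<open>(w, - k - inner z w)\<close> from \<open>E\<close>.\<close>
lemma mem_of_subgradient_epi_support:
  fixes E :: "('c::euclidean_space \<times> real) set"
  assumes "closed E" "convex E" and up: "\<And>q t t'. (q, t) \<in> E \<Longrightarrow> t \<le> t' \<Longrightarrow> (q, t') \<in> E"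
    and k: "epi_support E z = ereal k"
    and sub: "\<And>y. epi_support E z + ereal (inner (- w) (y - z)) \<le> epi_support E y"
  shows "(w, - k - inner z w) \<in> E"
proof (rule ccontr)
  assume notin: "(w, - k - inner z w) \<notin> E"
  have bound: "- inner z q - t \<le> k" if "(q, t) \<in> E" for q t
    using epi_support_upper[OF that, of z] k by simp
  have "E \<noteq> {}" using k unfolding epi_support_def by (auto simp: bot_ereal_def)
  then obtain q0 t0 where "(q0, t0) \<in> E" by auto
  then have "\<exists>a c b. 0 \<le> c \<and> inner a w + c * (- k - inner z w) < b \<and>
      (\<forall>q t. (q, t) \<in> E \<longrightarrow> b < inner a q + c * t)"
    by (rule separate_point_upclosed[OF assms(1,2) notin]) (rule up)
  then obtain a c b where sep: "0 \<le> c" "inner a w + c * (- k - inner z w) < b"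
    "\<And>q t. (q, t) \<in> E \<Longrightarrow> b < inner a q + c * t"
    by blast
  show False
  proof (cases "c = 0")
    case False
    then have "0 < c" using sep(1) by simp
    have le: "epi_support E ((1 / c) *\<^sub>R a) \<le> ereal (- b / c)"
    proof (rule epi_support_le)
      fix q t assume "(q, t) \<in> E"
      then have "b < inner a q + c * t" by (rule sep(3))
      then have "- (inner a q + c * t) / c \<le> - b / c"
        using \<open>0 < c\<close> by (intro divide_right_mono) auto
      then show "- inner ((1 / c) *\<^sub>R a) q - t \<le> - b / c"
        using \<open>0 < c\<close> by (simp add: add_divide_distrib diff_divide_distrib)
    qed
    have "k - (inner w a / c - inner w z) \<le> - b / c"
      using order_trans[OF sub[of "(1 / c) *\<^sub>R a"] le] k by (simp add: inner_diff_right)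
    then have "c * (k - (inner w a / c - inner w z)) \<le> c * (- b / c)"
      using \<open>0 < c\<close> by (rule mult_left_mono[OF _ less_imp_le])
    then have "c * k - inner w a + c * inner w z \<le> - b"
      using \<open>0 < c\<close> by (simp add: algebra_simps)
    then show False using sep(2) by (simp add: algebra_simps inner_commute)
  next
    case True
    have le: "epi_support E (z + a) \<le> ereal (k - b)"
    proof (rule epi_support_le)
      fix q t assume "(q, t) \<in> E"
      then have "- inner z q - t \<le> k" "b < inner a q" using bound sep(3) True by auto
      then show "- inner (z + a) q - t \<le> k - b" by (simp add: inner_add_left)
    qed
    have "k - inner w a \<le> k - b" using order_trans[OF sub[of "z + a"] le] k by simp
    then show False using sep(2) True by (simp add: inner_commute)
  qed
qed

definition tilted_minimizer :: "('a \<Rightarrow> ereal) \<Rightarrow> ('a \<Rightarrow> 'c::real_inner) \<Rightarrow> 'c \<Rightarrow> 'a \<Rightarrow> bool" where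
  "tilted_minimizer f M z u \<longleftrightarrow>
     \<bar>f u\<bar> \<noteq> \<infinity> \<and> (\<forall>x. f u + ereal (inner z (M u)) \<le> f x + ereal (inner z (M x)))"

lemma h1_fun_at_tilted_minimizer:
  fixes M :: "'a::euclidean_space \<Rightarrow> 'c::euclidean_space"
  assumes "linear M" "tilted_minimizer f M z u" "f u = ereal r"
  shows "h1_fun f M z = ereal (- inner z (M u) - r)"
proof -
  have adj: "inner (- adjoint M y) x = - inner y (M x)" for x y
    using adjoint_clauses(2)[OF assms(1)] by simp
  have min: "f u + ereal (inner z (M u)) \<le> f x + ereal (inner z (M x))" for x
    using assms(2) unfolding tilted_minimizer_def by blast
  show ?thesis
    unfolding h1_fun_def
  proof (rule antisym)
    show "conj_fun f (- adjoint M z) \<le> ereal (- inner z (M u) - r)"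
    proof (rule conj_fun_least)
      fix x
      show "ereal (inner (- adjoint M z) x) - f x \<le> ereal (- inner z (M u) - r)"
        using min[of x] assms(3) adj by (cases "f x") auto
    qed
    show "ereal (- inner z (M u) - r) \<le> conj_fun f (- adjoint M z)"
      using conj_fun_upper[of "- adjoint M z" u f] assms(3) adj by simp
  qed
qed

lemma subdiff_h1_fun_if_tilted_minimizer:
  fixes M :: "'a::euclidean_space \<Rightarrow> 'c::euclidean_space"
  assumes "linear M" "tilted_minimizer f M z u"
  shows "- M u \<in> subdiff (h1_fun f M) z"
proof -
  obtain r where r: "f u = ereal r" using assms(2) unfolding tilted_minimizer_def by fastforce
  note hz = h1_fun_at_tilted_minimizer[OF assms r]
  have "h1_fun f M z + ereal (inner (- M u) (y - z)) \<le> h1_fun f M y" for y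
  proof -
    have "- inner z (M u) - r + inner (- M u) (y - z) = inner (- adjoint M y) u - r"
      using adjoint_clauses(2)[OF assms(1)] by (simp add: inner_diff_right inner_commute)
    then have "h1_fun f M z + ereal (inner (- M u) (y - z)) = ereal (inner (- adjoint M y) u) - f u"
      using hz r by simp
    also have "\<dots> \<le> h1_fun f M y"
      unfolding h1_fun_def by (rule conj_fun_upper)
    finally show ?thesis .
  qed
  then show ?thesis unfolding subdiff_def using hz by simp
qed

lemma tilted_minimizer_if_le_h1_fun:
  fixes f :: "'a::euclidean_space \<Rightarrow> ereal" and M :: "'a \<Rightarrow> 'c::euclidean_space"
  assumes "proper_fun f" "linear M" "h1_fun f M z = ereal k" "f u \<le> ereal (- k - inner z (M u))"
  shows "tilted_minimizer f M z u"
proof -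
  have "ereal (- k) \<le> f x + ereal (inner z (M x))" for x
  proof -
    have "ereal (inner (- adjoint M z) x) - f x \<le> ereal k"
      using conj_fun_upper[of "- adjoint M z" x f] assms(3) unfolding h1_fun_def by simp
    then show ?thesis
      using adjoint_clauses(2)[OF assms(2)] proper_funD[OF assms(1), of x] by (cases "f x") auto
  qed
  moreover have "f u + ereal (inner z (M u)) \<le> ereal (- k)"
    using assms(4) proper_funD[OF assms(1), of u] by (cases "f u") auto
  ultimately show ?thesis
    using assms(4) proper_funD[OF assms(1), of u] unfolding tilted_minimizer_def
    by (auto intro: order_trans)
qed

lemma tilted_minimizer_if_subdiff_h1_fun:
  fixes f :: "'a::euclidean_space \<Rightarrow> ereal" and M :: "'a \<Rightarrow> 'c::euclidean_space"
  assumes f: "proper_fun f" "closed_fun f" "convex_fun f" and "linear M"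
    and ri: "rel_interior (edom (conj_fun f)) \<inter> range (adjoint M) \<noteq> {}"
    and w: "- w \<in> subdiff (h1_fun f M) z"
  shows "\<exists>u. M u = w \<and> tilted_minimizer f M z u"
proof -
  define E where "E = map_prod M id ` epigraph_e f"
  have h1: "h1_fun f M = epi_support E"
    unfolding E_def using h1_fun_eq_epi_support[OF f(1) \<open>linear M\<close>] .
  obtain k where k: "h1_fun f M z = ereal k"
    using w unfolding subdiff_def by (cases "h1_fun f M z") auto
  obtain y0 where "adjoint M y0 \<in> rel_interior (edom (conj_fun f))" using ri by blast
  then have "closed E" unfolding E_def by (rule closed_map_prod_epigraph[OF f \<open>linear M\<close>])
  moreover have "convex E"
    unfolding E_def using f(3) unfolding convex_fun_def
    by (rule convex_linear_image[OF linear_map_prod_id[OF \<open>linear M\<close>]])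
  moreover have "(q, t') \<in> E" if "(q, t) \<in> E" "t \<le> t'" for q t t'
    using that unfolding E_def by (force intro: epigraph_e_upclosed)
  ultimately have "(w, - k - inner z w) \<in> E"
    using mem_of_subgradient_epi_support[of E z k w] w k unfolding h1 subdiff_def by simp
  then obtain u where "M u = w" "f u \<le> ereal (- k - inner z (M u))" unfolding E_def by force
  then show ?thesis using tilted_minimizer_if_le_h1_fun[OF f(1) \<open>linear M\<close> k] by blast
qed

section \<open>Saddle points of the Lagrangian\<close>

lemma subdiff_add_inner:
  "w \<in> subdiff (\<lambda>z. h z + ereal (inner d z)) z \<longleftrightarrow> w - d \<in> subdiff h z"
proof (cases "h z")
  case (real a)
  have "h z + ereal (inner d z) + ereal (inner w (y - z)) \<le> h y + ereal (inner d y)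
    \<longleftrightarrow> h z + ereal (inner (w - d) (y - z)) \<le> h y" for y
    using real by (cases "h y") (auto simp: inner_diff_left inner_diff_right algebra_simps)
  then show ?thesis using real unfolding subdiff_def by simp
qed (simp_all add: subdiff_def)

lemma h2_fun_eq: "h2_fun g C d = (\<lambda>z. h1_fun g C z + ereal (inner d z))"
  unfolding h1_fun_def h2_fun_def by simp

lemma lagrangian_eq:
  "lagrangian f g M C d x y z = f x + g y + ereal (inner z (M x) + inner z (C y) - inner z d)"
  unfolding lagrangian_def by (simp add: inner_commute[of _ z] inner_add_right inner_diff_right)

lemma lagrangian_tilted_le:
  assumes "\<bar>f u\<bar> \<noteq> \<infinity>" "\<bar>g v\<bar> \<noteq> \<infinity>"
    and "lagrangian f g M C d u v z \<le> lagrangian f g M C d x v z"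
  shows "f u + ereal (inner z (M u)) \<le> f x + ereal (inner z (M x))"
  using assms unfolding lagrangian_eq by (cases "f u"; cases "g v"; cases "f x") auto

lemma lagrangian_swap: "lagrangian f g M C d u v z = lagrangian g f C M d v u z"
  unfolding lagrangian_def by (simp add: ac_simps)

lemma saddle_point_lagrangianD:
  assumes "proper_fun f" "proper_fun g" and sp: "saddle_point (lagrangian f g M C d) u v z"
  shows "M u + C v = d \<and> tilted_minimizer f M z u \<and> tilted_minimizer g C z v"
proof -
  let ?L = "lagrangian f g M C d"
  have fin: "\<bar>?L u v z\<bar> \<noteq> \<infinity>" and inf: "(INF p. ?L (fst p) (snd p) z) = ?L u v z"
    and sup: "(SUP z'. ?L u v z') = ?L u v z"
    using sp unfolding saddle_point_def by auto
  obtain a b where ab: "f u = ereal a" "g v = ereal b"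
    using fin proper_funD[OF assms(1), of u] proper_funD[OF assms(2), of v] unfolding lagrangian_def
    by (cases "f u"; cases "g v") auto
  define e where "e = M u + C v - d"
  have L: "?L u v z' = ereal (a + b + inner e z')" for z'
    unfolding lagrangian_def e_def using ab by simp
  have "?L u v (z + e) \<le> ?L u v z" using sup by (metis SUP_upper UNIV_I)
  then have "inner e e \<le> 0" unfolding L by (simp add: inner_add_right)
  then have "inner e e = 0" using inner_ge_zero[of e] by linarith
  then have "M u + C v = d" unfolding e_def by simp
  have "?L u v z \<le> ?L x y z" for x y
    using INF_lower[of "(x, y)" UNIV "\<lambda>p. ?L (fst p) (snd p) z"] inf by simp
  then have "f u + ereal (inner z (M u)) \<le> f x + ereal (inner z (M x))"
    and "g v + ereal (inner z (C v)) \<le> g y + ereal (inner z (C y))" for x y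
    using lagrangian_tilted_le[of f u g v M C d z] lagrangian_tilted_le[of g v f u C M d z] ab
    by (simp_all add: lagrangian_swap[of f g])
  with \<open>M u + C v = d\<close> ab show ?thesis unfolding tilted_minimizer_def by simp
qed

lemma saddle_point_lagrangianI:
  assumes "proper_fun f" "proper_fun g" "M u + C v = d"
    and u: "tilted_minimizer f M z u" and v: "tilted_minimizer g C z v"
  shows "saddle_point (lagrangian f g M C d) u v z"
proof -
  let ?L = "lagrangian f g M C d"
  obtain a b where ab: "f u = ereal a" "g v = ereal b"
    using u v unfolding tilted_minimizer_def by (cases "f u"; cases "g v") auto
  have L: "?L u v z' = ereal (a + b)" for z'
    unfolding lagrangian_def using ab assms(3) by simp
  have "ereal (a + b) \<le> ?L x y z" for x y
  proof -
    have "f u + ereal (inner z (M u)) \<le> f x + ereal (inner z (M x))"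
      "g v + ereal (inner z (C v)) \<le> g y + ereal (inner z (C y))"
      using u v unfolding tilted_minimizer_def by blast+
    moreover have "inner z (M u) + inner z (C v) = inner z d"
      using assms(3) by (simp flip: inner_add_right)
    ultimately show ?thesis
      using ab proper_funD[OF assms(1), of x] proper_funD[OF assms(2), of y] unfolding lagrangian_eq
      by (cases "f x"; cases "g y") auto
  qed
  then have "(INF p. ?L (fst p) (snd p) z) = ?L u v z"
    unfolding L by (intro antisym INF_greatest) (auto intro: INF_lower2[of "(u, v)"] simp: L)
  then show ?thesis unfolding saddle_point_def L by simp
qed

theorem mainTheorem1:
  fixes f :: "'a::euclidean_space \<Rightarrow> ereal"
    and g :: "'b::euclidean_space \<Rightarrow> ereal"
    and M :: "'a \<Rightarrow> 'c::euclidean_space"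
    and C :: "'b \<Rightarrow> 'c"
    and d :: 'c
  assumes "proper_fun f" "closed_fun f" "convex_fun f"
    and "proper_fun g" "closed_fun g" "convex_fun g"
    and "linear M" "linear C"
  shows "(\<forall>u v z. saddle_point (lagrangian f g M C d) u v z \<longrightarrow>
            (z, d - C v) \<in> ext_sol_set (h1_fun f M) (h2_fun g C d))
       \<and> ((rel_interior (edom (conj_fun f)) \<inter> range (adjoint M) \<noteq> {} \<and>
            rel_interior (edom (conj_fun g)) \<inter> range (adjoint C) \<noteq> {}) \<longrightarrow>
           (\<forall>z w. (z, w) \<in> ext_sol_set (h1_fun f M) (h2_fun g C d) \<longrightarrow>
              (\<exists>u v. w = d - C v \<and> w = M u \<and> saddle_point (lagrangian f g M C d) u v z)))"
proof (intro conjI impI allI)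
  fix u v z
  assume "saddle_point (lagrangian f g M C d) u v z"
  then have "M u + C v = d" "tilted_minimizer f M z u" "tilted_minimizer g C z v"
    using saddle_point_lagrangianD[OF assms(1,4)] by blast+
  then show "(z, d - C v) \<in> ext_sol_set (h1_fun f M) (h2_fun g C d)"
    using subdiff_h1_fun_if_tilted_minimizer[OF assms(7)] subdiff_h1_fun_if_tilted_minimizer[OF assms(8)]
    unfolding ext_sol_set_def h2_fun_eq subdiff_add_inner by auto
next
  fix z w
  assume ri: "rel_interior (edom (conj_fun f)) \<inter> range (adjoint M) \<noteq> {} \<and>
    rel_interior (edom (conj_fun g)) \<inter> range (adjoint C) \<noteq> {}"
    and "(z, w) \<in> ext_sol_set (h1_fun f M) (h2_fun g C d)"
  then have "- w \<in> subdiff (h1_fun f M) z" "- (d - w) \<in> subdiff (h1_fun g C) z"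
    unfolding ext_sol_set_def h2_fun_eq subdiff_add_inner by auto
  then obtain u v where "M u = w" "tilted_minimizer f M z u" "C v = d - w" "tilted_minimizer g C z v"
    using tilted_minimizer_if_subdiff_h1_fun[OF assms(1-3,7)] tilted_minimizer_if_subdiff_h1_fun[OF assms(4-6,8)] ri
    by meson
  then show "\<exists>u v. w = d - C v \<and> w = M u \<and> saddle_point (lagrangian f g M C d) u v z"
    using saddle_point_lagrangianI[OF assms(1,4)] by force
qed

end
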